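(* Let $(P,\lambda)$ be a marked poset which is strict and irredundant. If all inequalities describing the marked chain polytope $\mathcal{C}(P,\lambda)$ (in an irredundant description) are of the form $x_i\ge 0$ for $i\in P\setminus P^*$ or $\sum_{i\in I}x_i\le 1$ for subsets $I\subseteq P\setminus P^*$, then $\mathcal{C}(P,\lambda)$ is the chain polytope of some poset on the set $P\setminus P^*$.
   Context: A marked poset $(P,\lambda)$ is a finite poset $(P,\preceq)$ together with an induced subposet $P^*\subseteq P$ of marked elements and an order-preserving marking $\lambda:P^*\to\mathbb{R}$; it is always assumed that all minimal and all maximal elements of $P$ lie in $P^*$. It is strict if $\lambda(a)<\lambda(b)$ whenever $a\prec b$ in $P^*$, and irredundant (regular) if for every covering relation $p\prec q$ in $P$ and all $a,b\in P^*$ with $a\preceq q$ and $p\preceq b$, one has $a=b$ or $\lambda(a)<\lambda(b)$. The marked chain polytope $\mathcal{C}(P,\lambda)$ is the set of all $x\in\mathbb{R}_{\ge0}^{P\setminus P^*}$ with $x_{p_1}+\dots+x_{p_k}\le\lambda(b)-\lambda(a)$ for every maximal chain $a\prec p_1\prec\cdots\prec p_k\prec b$ in $P$ with $a,b\in P^*$ and $p_1,\dots,p_k\in P\setminus P^*$. The chain polytope of a finite poset $Q$ is the set of $x\in\mathbb{R}^Q$ with $x_c\ge0$ for all $c$ and $x_{c_1}+\dots+x_{c_k}\le 1$ for every chain $c_1\prec\cdots\prec c_k$ in $Q$. *)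

theory Defs
  imports Main "HOL.Real"
begin

definition poset_on :: "'a set \<Rightarrow> ('a \<times> 'a) set \<Rightarrow> bool" where
  "poset_on P le \<longleftrightarrow> le \<subseteq> P \<times> P \<and> (\<forall>x\<in>P. (x,x) \<in> le) \<and> trans le \<and> antisym le"

definition strictly_below :: "('a \<times> 'a) set \<Rightarrow> 'a \<Rightarrow> 'a \<Rightarrow> bool" where
  "strictly_below le a b \<longleftrightarrow> (a,b) \<in> le \<and> a \<noteq> b"

definition covers :: "('a \<times> 'a) set \<Rightarrow> 'a \<Rightarrow> 'a \<Rightarrow> bool" where
  "covers le p q \<longleftrightarrow> strictly_below le p q \<and>
     \<not> (\<exists>z. strictly_below le p z \<and> strictly_below le z q)"

definition marked_poset :: "'a set \<Rightarrow> ('a \<times> 'a) set \<Rightarrow> 'a set \<Rightarrow> ('a \<Rightarrow> real) \<Rightarrow> bool" where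
  "marked_poset P le Ps lam \<longleftrightarrow> finite P \<and> poset_on P le \<and> Ps \<subseteq> P \<and>
     (\<forall>a\<in>Ps. \<forall>b\<in>Ps. (a,b) \<in> le \<longrightarrow> lam a \<le> lam b) \<and>
     (\<forall>p\<in>P. (\<forall>q\<in>P. \<not> strictly_below le q p) \<longrightarrow> p \<in> Ps) \<and>
     (\<forall>p\<in>P. (\<forall>q\<in>P. \<not> strictly_below le p q) \<longrightarrow> p \<in> Ps)"

definition strict_marked :: "('a \<times> 'a) set \<Rightarrow> 'a set \<Rightarrow> ('a \<Rightarrow> real) \<Rightarrow> bool" where
  "strict_marked le Ps lam \<longleftrightarrow>
     (\<forall>a\<in>Ps. \<forall>b\<in>Ps. strictly_below le a b \<longrightarrow> lam a < lam b)"

definition irredundant_marked :: "('a \<times> 'a) set \<Rightarrow> 'a set \<Rightarrow> ('a \<Rightarrow> real) \<Rightarrow> bool" where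
  "irredundant_marked le Ps lam \<longleftrightarrow>
     (\<forall>p q. covers le p q \<longrightarrow>
        (\<forall>a\<in>Ps. \<forall>b\<in>Ps. (a,q) \<in> le \<and> (p,b) \<in> le \<longrightarrow> a = b \<or> lam a < lam b))"

text \<open>Points of R^Q, represented as functions vanishing outside Q.\<close>
definition vecs :: "'a set \<Rightarrow> ('a \<Rightarrow> real) set" where
  "vecs Q = {x. \<forall>i. i \<notin> Q \<longrightarrow> x i = 0}"

text \<open>Marked chain polytope: constraints for every saturated (maximal) chain
  a < p1 < ... < pk < b with a, b marked and all p_i unmarked.\<close>
definition marked_chain_polytope ::
  "'a set \<Rightarrow> ('a \<times> 'a) set \<Rightarrow> 'a set \<Rightarrow> ('a \<Rightarrow> real) \<Rightarrow> ('a \<Rightarrow> real) set" where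
  "marked_chain_polytope P le Ps lam =
     {x \<in> vecs (P - Ps). (\<forall>i \<in> P - Ps. 0 \<le> x i) \<and>
        (\<forall>a b ps. a \<in> Ps \<and> b \<in> Ps \<and> set ps \<subseteq> P - Ps \<and>
            successively (covers le) (a # ps @ [b]) \<longrightarrow>
            sum_list (map x ps) \<le> lam b - lam a)}"

definition is_chain :: "('a \<times> 'a) set \<Rightarrow> 'a set \<Rightarrow> bool" where
  "is_chain R C \<longleftrightarrow> (\<forall>c\<in>C. \<forall>d\<in>C. (c,d) \<in> R \<or> (d,c) \<in> R)"

definition chain_polytope :: "'a set \<Rightarrow> ('a \<times> 'a) set \<Rightarrow> ('a \<Rightarrow> real) set" where
  "chain_polytope Q R =
     {x \<in> vecs Q. (\<forall>c\<in>Q. 0 \<le> x c) \<and> (\<forall>C. C \<subseteq> Q \<and> is_chain R C \<longrightarrow> sum x C \<le> 1)}"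

definition special_hpoly :: "'a set \<Rightarrow> 'a set \<Rightarrow> 'a set set \<Rightarrow> ('a \<Rightarrow> real) set" where
  "special_hpoly Q N II =
     {x \<in> vecs Q. (\<forall>i\<in>N. 0 \<le> x i) \<and> (\<forall>I\<in>II. sum x I \<le> 1)}"

end

theory Submission
  imports Defs
begin

(* Write Q = P - Ps and order Q by p <= q iff a saturated chain of P runs from p up to q
   through unmarked elements only. Every chain of this order lies in the interior of a saturated
   chain a < p_1 < ... < p_k < b with a, b marked and all p_i unmarked, and the inequality of C(P,lam)
   for such a chain reads x(p_1) + ... + x(p_k) <= lam b - lam a. So the theorem follows once
   lam b - lam a = 1 whenever k >= 1.
   The point with value 1/k on p_1, ..., p_k satisfies every inequality sum_I x <= 1, hence lies
   in C(P,lam), which gives lam b - lam a >= 1. Conversely, irredundancy of lam provides delta > 0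
   and a point z of C(P,lam), tight on the chain, such that moving delta from any p_j (j < k) to p_k
   stays in C(P,lam). If lam b - lam a > 1, no I contains the whole chain (z would violate it), so
   z + delta e_(p_k) still satisfies every inequality sum_I x <= 1 while violating the chain
   inequality.
   Strictness of lam and irredundancy of the description are not needed. *)

lemma finite_has_maximal_rel:
  assumes "finite D" "D \<noteq> {}" "transp S" "irreflp S"
  obtains m where "m \<in> D" "\<And>z. z \<in> D \<Longrightarrow> \<not> S m z"
proof -
  have "\<exists>m\<in>D. \<forall>z\<in>D. \<not> S m z"
    using assms(1,2)
  proof (induction rule: finite_ne_induct)
    case (singleton x)
    then show ?case using assms(4) by (simp add: irreflpD)
  next
    case (insert x F)
    then obtain m where m: "m \<in> F" "\<forall>z\<in>F. \<not> S m z" by blast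
    show ?case
    proof (cases "S m x")
      case True
      then have "\<forall>z\<in>insert x F. \<not> S x z"
        using m assms(3,4) by (metis insert_iff irreflpD transpD)
      then show ?thesis by blast
    qed (use m in blast)
  qed
  then show ?thesis using that by blast
qed

lemma finite_uniform_gap:
  fixes f g :: "'b \<Rightarrow> real"
  assumes "finite T" "\<And>t. t \<in> T \<Longrightarrow> f t < g t"
  shows "\<exists>\<epsilon>>0. \<forall>t\<in>T. f t + \<epsilon> \<le> g t"
proof (intro exI conjI ballI)
  let ?\<epsilon> = "Min (insert 1 ((\<lambda>t. g t - f t) ` T))"
  show "0 < ?\<epsilon>"
    using assms by (subst Min_gr_iff) auto
  show "f t + ?\<epsilon> \<le> g t" if "t \<in> T" for t
  proof -
    have "?\<epsilon> \<le> g t - f t" using assms(1) that by (intro Min_le) auto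
    then show ?thesis by simp
  qed
qed

lemma successively_append_last:
  "successively r xs \<Longrightarrow> xs \<noteq> [] \<Longrightarrow> successively r (last xs # ys) \<Longrightarrow> successively r (xs @ ys)"
  by (auto simp: successively_append_iff successively_Cons)

lemma successively_ends:
  assumes "successively r (a # xs @ [b])" "xs \<noteq> []"
  shows "r a (hd xs)" "r (last xs) b"
proof -
  show "r a (hd xs)" using assms by (cases xs) simp_all
  obtain ys y where xs: "xs = ys @ [y]" using assms(2) rev_exhaust by blast
  then have "successively r ((a # ys) @ [y, b])" using assms(1) by simp
  then have "successively r [y, b]" unfolding successively_append_iff by blast
  then show "r (last xs) b" using xs by simp
qed

lemma trancl_imp_successively:
  assumes "(x, y) \<in> r\<^sup>+"
  shows "\<exists>qs. successively (\<lambda>u v. (u, v) \<in> r) (x # qs @ [y])"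
  using assms
proof (induction rule: trancl_induct)
  case (base y)
  then show ?case by (intro exI[of _ "[]"]) simp
next
  case (step y z)
  then obtain qs where "successively (\<lambda>u v. (u, v) \<in> r) (x # qs @ [y])" by blast
  then have "successively (\<lambda>u v. (u, v) \<in> r) ((x # qs @ [y]) @ [z])"
    using step(2) by (intro successively_append_last) simp_all
  then show ?case by (intro exI[of _ "qs @ [y]"]) simp
qed

lemma successively_rel_set_subset:
  "successively (\<lambda>u v. (u, v) \<in> r) (x # xs) \<Longrightarrow> r \<subseteq> Q \<times> Q \<Longrightarrow> set xs \<subseteq> Q"
  by (induction xs arbitrary: x) (auto simp: successively_Cons)

lemma is_chain_if_successively:
  assumes "trans R" "\<And>x. x \<in> set xs \<Longrightarrow> (x, x) \<in> R"
    and "successively (\<lambda>u v. (u, v) \<in> R) xs"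
  shows "is_chain R (set xs)"
  unfolding is_chain_def
proof (intro ballI)
  have sorted: "sorted_wrt (\<lambda>u v. (u, v) \<in> R) xs"
    using assms(1,3) successively_conv_sorted_wrt[of "\<lambda>u v. (u, v) \<in> R"]
    by (auto simp: trans_def transp_def)
  fix c d assume "c \<in> set xs" "d \<in> set xs"
  then obtain i j where "i < length xs" "c = xs ! i" "j < length xs" "d = xs ! j"
    by (auto simp: in_set_conv_nth)
  then show "(c, d) \<in> R \<or> (d, c) \<in> R"
    using sorted_wrt_nth_less[OF sorted] assms(2) nth_mem
    by (cases i j rule: linorder_cases) auto
qed

lemma poset_on_converse: "poset_on P le \<Longrightarrow> poset_on P (le\<inverse>)"
  unfolding poset_on_def by auto

lemma strictly_below_converse [simp]: "strictly_below (le\<inverse>) a b \<longleftrightarrow> strictly_below le b a"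
  unfolding strictly_below_def by auto

lemma covers_converse [simp]: "covers (le\<inverse>) a b \<longleftrightarrow> covers le b a"
  unfolding covers_def by auto

lemma distinct_if_sorted_strictly_below: "sorted_wrt (strictly_below le) xs \<Longrightarrow> distinct xs"
  by (induction xs) (auto simp: strictly_below_def)

lemma covers_imp_le: "covers le a b \<Longrightarrow> (a, b) \<in> le"
  unfolding covers_def strictly_below_def by simp

locale finite_poset =
  fixes P :: "'a set" and le :: "('a \<times> 'a) set"
  assumes finite_carrier: "finite P" and poset: "poset_on P le"
begin

lemma le_carrier: "(a, b) \<in> le \<Longrightarrow> a \<in> P \<and> b \<in> P"
  using poset unfolding poset_on_def by auto

lemma le_refl: "a \<in> P \<Longrightarrow> (a, a) \<in> le"
  using poset unfolding poset_on_def by auto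

lemma le_trans: "(a, b) \<in> le \<Longrightarrow> (b, c) \<in> le \<Longrightarrow> (a, c) \<in> le"
  using poset unfolding poset_on_def trans_def by blast

lemma le_antisym: "(a, b) \<in> le \<Longrightarrow> (b, a) \<in> le \<Longrightarrow> a = b"
  using poset unfolding poset_on_def antisym_def by blast

lemma transp_strictly_below: "transp (strictly_below le)"
  unfolding transp_def strictly_below_def using le_trans le_antisym by blast

lemma irreflp_strictly_below: "irreflp (strictly_below le)"
  unfolding irreflp_def strictly_below_def by simp

lemma dual: "finite_poset P (le\<inverse>)"
  using finite_carrier poset_on_converse[OF poset] by unfold_locales

lemma sorted_wrt_if_successively_covers:
  "successively (covers le) xs \<Longrightarrow> sorted_wrt (strictly_below le) xs"
  using successively_conv_sorted_wrt[OF transp_strictly_below]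
  by (metis covers_def successively_mono)

lemma saturated_chain_interior:
  assumes "successively (covers le) (a # xs @ [b])"
  shows "sorted_wrt (strictly_below le) xs" "distinct xs" "\<And>x. x \<in> set xs \<Longrightarrow> (x, b) \<in> le"
    and "successively (covers le) xs"
proof -
  have "sorted_wrt (strictly_below le) (a # xs @ [b])"
    using sorted_wrt_if_successively_covers[OF assms] .
  then show sorted: "sorted_wrt (strictly_below le) xs" "\<And>x. x \<in> set xs \<Longrightarrow> (x, b) \<in> le"
    unfolding strictly_below_def by (auto simp: sorted_wrt_append)
  show "distinct xs" using distinct_if_sorted_strictly_below[OF sorted(1)] .
  show "successively (covers le) xs"
    using assms by (simp add: successively_append_iff successively_Cons)
qed

lemma sorted_strictly_below_nth_le:
  assumes "sorted_wrt (strictly_below le) xs" "i < length xs" "j < length xs"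
    and "(xs ! j, xs ! i) \<in> le"
  shows "j \<le> i"
proof (rule ccontr)
  assume "\<not> j \<le> i"
  then have "strictly_below le (xs ! i) (xs ! j)"
    using sorted_wrt_nth_less[OF assms(1)] assms(3) by simp
  then show False
    using assms(4) le_antisym unfolding strictly_below_def by blast
qed

lemma exists_cover_below:
  assumes "q \<in> P" "strictly_below le q p"
  obtains r where "covers le r p"
proof -
  let ?D = "{q \<in> P. strictly_below le q p}"
  obtain r where r: "r \<in> ?D" "\<And>z. z \<in> ?D \<Longrightarrow> \<not> strictly_below le r z"
    using finite_has_maximal_rel[of ?D "strictly_below le"] assms finite_carrier
      transp_strictly_below irreflp_strictly_below by auto
  have "covers le r p"
    unfolding covers_def
  proof (intro conjI notI)
    show "strictly_below le r p" using r by simp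
    assume "\<exists>z. strictly_below le r z \<and> strictly_below le z p"
    then show False
      using r le_carrier unfolding strictly_below_def by blast
  qed
  then show ?thesis using that by blast
qed

lemma saturated_chain_from_below:
  assumes minimal: "\<And>p. p \<in> P \<Longrightarrow> \<forall>q\<in>P. \<not> strictly_below le q p \<Longrightarrow> p \<in> M"
    and "p \<in> P - M"
  shows "\<exists>a\<in>M. \<exists>qs. set qs \<subseteq> P - M \<and> successively (covers le) (a # qs @ [p])"
  using assms(2)
proof (induction "card {q \<in> P. strictly_below le q p}" arbitrary: p rule: less_induct)
  case less
  then obtain q where "q \<in> P" "strictly_below le q p" using minimal by blast
  then obtain r where r: "covers le r p" using exists_cover_below by blast
  have rP: "r \<in> P" using le_carrier covers_imp_le[OF r] by blast
  show ?case
  proof (cases "r \<in> M")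
    case True
    then show ?thesis using r by (intro bexI[of _ r] exI[of _ "[]"]) auto
  next
    case False
    have "{q \<in> P. strictly_below le q r} \<subset> {q \<in> P. strictly_below le q p}"
      using r rP transp_strictly_below irreflp_strictly_below unfolding covers_def
      by (auto dest: transpD irreflpD)
    then have "card {q \<in> P. strictly_below le q r} < card {q \<in> P. strictly_below le q p}"
      using finite_carrier by (simp add: psubset_card_mono)
    then obtain a qs where "a \<in> M" "set qs \<subseteq> P - M" "successively (covers le) (a # qs @ [r])"
      using less.hyps[of r] False rP by blast
    moreover from this(3) have "successively (covers le) ((a # qs @ [r]) @ [p])"
      using r by (intro successively_append_last) simp_all
    ultimately show ?thesis using False rP by (intro bexI[of _ a] exI[of _ "qs @ [r]"]) auto
  qed
qed

lemma saturated_chain_to_above: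
  assumes "\<And>p. p \<in> P \<Longrightarrow> \<forall>q\<in>P. \<not> strictly_below le p q \<Longrightarrow> p \<in> M"
    and "p \<in> P - M"
  shows "\<exists>b\<in>M. \<exists>qs. set qs \<subseteq> P - M \<and> successively (covers le) (p # qs @ [b])"
proof -
  interpret dual: finite_poset P "le\<inverse>" by (rule dual)
  have "\<exists>b\<in>M. \<exists>qs. set qs \<subseteq> P - M \<and> successively (covers (le\<inverse>)) (b # qs @ [p])"
    by (rule dual.saturated_chain_from_below) (use assms in auto)
  then obtain b qs where "b \<in> M" "set qs \<subseteq> P - M" "successively (covers (le\<inverse>)) (b # qs @ [p])"
    by blast
  moreover from this(3) have "successively (covers le) (rev (b # qs @ [p]))"
    by (subst successively_rev) simp
  moreover have "rev (b # qs @ [p]) = p # rev qs @ [b]" by simp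
  ultimately show ?thesis by (intro bexI[of _ b] exI[of _ "rev qs"]) auto
qed

end

lemma marked_chain_polytopeD:
  assumes "x \<in> marked_chain_polytope P le Ps lam"
  shows "\<And>i. i \<in> P - Ps \<Longrightarrow> 0 \<le> x i"
    and "\<And>a b ps. a \<in> Ps \<Longrightarrow> b \<in> Ps \<Longrightarrow> set ps \<subseteq> P - Ps \<Longrightarrow>
      successively (covers le) (a # ps @ [b]) \<Longrightarrow> sum_list (map x ps) \<le> lam b - lam a"
  using assms unfolding marked_chain_polytope_def by blast+

text \<open>The potential \<open>y\<close> is a point of the marked order polytope; along a saturated chain
  the increments of \<open>y\<close> telescope to \<open>lam b - lam a\<close>.\<close>

lemma marked_chain_polytope_memI:
  assumes "x \<in> vecs (P - Ps)" "\<And>i. i \<in> P - Ps \<Longrightarrow> 0 \<le> x i"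
    and y_mono: "\<And>u v. covers le u v \<Longrightarrow> y u \<le> y v"
    and y_marks: "\<And>a. a \<in> Ps \<Longrightarrow> y a = lam a"
    and dominated: "\<And>q w. w \<in> P - Ps \<Longrightarrow> covers le q w \<Longrightarrow> x w \<le> y w - y q"
  shows "x \<in> marked_chain_polytope P le Ps lam"
proof -
  have telescope: "sum_list (map x ts) \<le> y v - y u"
    if "successively (covers le) (u # ts @ [v])" "set ts \<subseteq> P - Ps" for u v ts
    using that
  proof (induction ts arbitrary: u)
    case Nil
    then show ?case using y_mono by simp
  next
    case (Cons t ts)
    then have "sum_list (map x ts) \<le> y v - y t" "x t \<le> y t - y u"
      using dominated by simp_all
    then show ?case by simp
  qed
  show ?thesis
    unfolding marked_chain_polytope_def
  proof (intro CollectI conjI allI impI ballI)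
    fix a b ps
    assume "a \<in> Ps \<and> b \<in> Ps \<and> set ps \<subseteq> P - Ps \<and> successively (covers le) (a # ps @ [b])"
    then show "sum_list (map x ps) \<le> lam b - lam a" using telescope[of a ps b] y_marks by simp
  qed (use assms(1,2) in auto)
qed

definition chain_point :: "'a list \<Rightarrow> (nat \<Rightarrow> real) \<Rightarrow> 'a \<Rightarrow> real" where
  "chain_point ps c w = (\<Sum>i<length ps. if ps ! i = w then c (Suc i) - c i else 0)"

lemma chain_point_nth:
  assumes "distinct ps" "i < length ps"
  shows "chain_point ps c (ps ! i) = c (Suc i) - c i"
proof -
  have "chain_point ps c (ps ! i) = (\<Sum>k<length ps. if k = i then c (Suc k) - c k else 0)"
    unfolding chain_point_def using assms nth_eq_iff_index_eq by (intro sum.cong) auto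
  then show ?thesis using assms(2) by simp
qed

lemma chain_point_outside: "w \<notin> set ps \<Longrightarrow> chain_point ps c w = 0"
  unfolding chain_point_def by (intro sum.neutral) auto

lemma sum_list_chain_point:
  assumes "distinct ps"
  shows "sum_list (map (chain_point ps c) ps) = c (length ps) - c 0"
proof -
  have "sum_list (map (chain_point ps c) ps) = (\<Sum>i<length ps. chain_point ps c (ps ! i))"
    by (simp add: sum_list_sum_nth atLeast0LessThan)
  also have "\<dots> = (\<Sum>i<length ps. c (Suc i) - c i)"
    using chain_point_nth[OF assms] by simp
  also have "\<dots> = c (length ps) - c 0" by (rule sum_lessThan_telescope)
  finally show ?thesis .
qed

lemma chain_point_shift:
  assumes "distinct ps" "Suc j < length ps"
  shows "chain_point ps (\<lambda>i. c i - (if j < i \<and> i < length ps then \<delta> else 0)) =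
    (chain_point ps c)(ps ! j := chain_point ps c (ps ! j) - \<delta>,
      last ps := chain_point ps c (last ps) + \<delta>)"
proof
  fix w
  have "ps \<noteq> []" using assms(2) by auto
  then have last: "last ps = ps ! (length ps - 1)" by (rule last_conv_nth)
  show "chain_point ps (\<lambda>i. c i - (if j < i \<and> i < length ps then \<delta> else 0)) w =
    ((chain_point ps c)(ps ! j := chain_point ps c (ps ! j) - \<delta>,
      last ps := chain_point ps c (last ps) + \<delta>)) w"
  proof (cases "w \<in> set ps")
    case False
    moreover have "ps ! j \<in> set ps" "last ps \<in> set ps"
      using assms(2) \<open>ps \<noteq> []\<close> by auto
    ultimately show ?thesis using chain_point_outside[OF False] by auto
  next
    case True
    then obtain i where i: "i < length ps" "w = ps ! i" by (auto simp: in_set_conv_nth)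
    have "ps ! i = ps ! j \<longleftrightarrow> i = j" "ps ! i = last ps \<longleftrightarrow> i = length ps - 1"
      using nth_eq_iff_index_eq[OF assms(1)] i(1) assms(2) last by auto
    then show ?thesis
      using i assms chain_point_nth[OF assms(1)] last by auto
  qed
qed

lemma special_hpoly_uniform:
  assumes "finite Q" "II \<subseteq> Pow Q" "V \<subseteq> Q" "V \<noteq> {}"
  shows "(\<lambda>v. if v \<in> V then 1 / real (card V) else 0) \<in> special_hpoly Q N II"
  unfolding special_hpoly_def
proof (intro CollectI conjI ballI)
  show "(\<lambda>v. if v \<in> V then 1 / real (card V) else 0) \<in> vecs Q"
    unfolding vecs_def using assms(3) by auto
  show "0 \<le> (if i \<in> V then 1 / real (card V) else 0)" for i by simp
  have V: "finite V" "0 < card V" using assms(1,3,4) finite_subset card_gt_0_iff by blast+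
  fix I assume "I \<in> II"
  then have I: "finite I" using assms(1,2) finite_subset by blast
  have "(\<Sum>v\<in>I. if v \<in> V then 1 / real (card V) else 0) = real (card (I \<inter> V)) / real (card V)"
    using sum.inter_restrict[OF I, of "\<lambda>_. 1 / real (card V)" V] by simp
  also have "\<dots> \<le> 1" using card_mono[OF V(1), of "I \<inter> V"] V(2) by simp
  finally show "(\<Sum>v\<in>I. if v \<in> V then 1 / real (card V) else 0) \<le> 1" .
qed

text \<open>Every inequality \<open>sum z I \<le> 1\<close> misses a point of \<open>V\<close>, since \<open>z\<close> would violate it otherwise.
  If it misses \<open>l\<close>, raising \<open>z l\<close> does not affect it; if it misses some \<open>j \<noteq> l\<close>, the raised point
  agrees on \<open>I\<close> with the move of \<open>\<delta>\<close> from \<open>j\<close> to \<open>l\<close>.\<close>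

lemma special_hpoly_raise:
  assumes z: "z \<in> special_hpoly Q N II" and "finite Q" "II \<subseteq> Pow Q"
    and nonneg: "\<And>v. v \<in> Q \<Longrightarrow> 0 \<le> z v"
    and V: "V \<subseteq> Q" "l \<in> V" "1 < sum z V" and \<delta>: "0 \<le> \<delta>"
    and moves: "\<And>j. j \<in> V \<Longrightarrow> j \<noteq> l \<Longrightarrow> z(j := z j - \<delta>, l := z l + \<delta>) \<in> special_hpoly Q N II"
  shows "z(l := z l + \<delta>) \<in> special_hpoly Q N II"
  unfolding special_hpoly_def
proof (intro CollectI conjI ballI)
  show "z(l := z l + \<delta>) \<in> vecs Q"
    using z V(1,2) unfolding special_hpoly_def vecs_def by auto
  show "0 \<le> (z(l := z l + \<delta>)) i" if "i \<in> N" for i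
    using z that \<delta> unfolding special_hpoly_def by auto
  fix I assume I: "I \<in> II"
  have bound: "sum y I \<le> 1" if "y \<in> special_hpoly Q N II" for y
    using that I unfolding special_hpoly_def by blast
  show "sum (z(l := z l + \<delta>)) I \<le> 1"
  proof (cases "l \<in> I")
    case False
    then have "sum (z(l := z l + \<delta>)) I = sum z I" by (intro sum.cong) auto
    then show ?thesis using bound[OF z] by simp
  next
    case True
    have "finite I" "I \<subseteq> Q" using I assms(2,3) finite_subset by blast+
    have "\<not> V \<subseteq> I"
    proof
      assume "V \<subseteq> I"
      then have "sum z V \<le> sum z I"
        using \<open>finite I\<close> \<open>I \<subseteq> Q\<close> nonneg by (intro sum_mono2) auto
      then show False using bound[OF z] V(3) by simp
    qed
    then obtain j where j: "j \<in> V" "j \<notin> I" by blast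
    then have "sum (z(l := z l + \<delta>)) I = sum (z(j := z j - \<delta>, l := z l + \<delta>)) I"
      by (intro sum.cong) auto
    also have "\<dots> \<le> 1" using bound[OF moves[OF j(1)]] j(2) True by blast
    finally show ?thesis .
  qed
qed

locale finite_marked_poset =
  fixes P Ps :: "'a set" and le :: "('a \<times> 'a) set" and lam :: "'a \<Rightarrow> real"
  assumes marked: "marked_poset P le Ps lam"

sublocale finite_marked_poset \<subseteq> finite_poset P le
  using marked unfolding marked_poset_def by unfold_locales auto

context finite_marked_poset
begin

lemma marks_subset: "Ps \<subseteq> P"
  using marked unfolding marked_poset_def by blast

lemma finite_marks: "finite Ps"
  using marks_subset finite_carrier finite_subset by blast

lemma finite_unmarked: "finite (P - Ps)"
  using finite_carrier by simp

lemma lam_mono: "a \<in> Ps \<Longrightarrow> b \<in> Ps \<Longrightarrow> (a, b) \<in> le \<Longrightarrow> lam a \<le> lam b"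
  using marked unfolding marked_poset_def by blast

lemma saturated_chain_from_mark:
  "p \<in> P - Ps \<Longrightarrow> \<exists>a\<in>Ps. \<exists>qs. set qs \<subseteq> P - Ps \<and> successively (covers le) (a # qs @ [p])"
  using marked unfolding marked_poset_def by (intro saturated_chain_from_below) auto

lemma saturated_chain_to_mark:
  "p \<in> P - Ps \<Longrightarrow> \<exists>b\<in>Ps. \<exists>qs. set qs \<subseteq> P - Ps \<and> successively (covers le) (p # qs @ [b])"
  using marked unfolding marked_poset_def by (intro saturated_chain_to_above) auto

lemma exists_mark_below:
  assumes "p \<in> P"
  shows "\<exists>a\<in>Ps. (a, p) \<in> le"
proof (cases "p \<in> Ps")
  case True
  then show ?thesis using assms le_refl by blast
next
  case False
  then obtain a qs where "a \<in> Ps" "successively (covers le) (a # qs @ [p])"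
    using saturated_chain_from_mark assms by blast
  then show ?thesis
    using sorted_wrt_if_successively_covers unfolding strictly_below_def by fastforce
qed

definition lower_mark :: "'a \<Rightarrow> real" where
  "lower_mark p = Max (lam ` {a \<in> Ps. (a, p) \<in> le})"

lemma lower_mark_ge: "a \<in> Ps \<Longrightarrow> (a, p) \<in> le \<Longrightarrow> lam a \<le> lower_mark p"
  unfolding lower_mark_def using finite_marks by (intro Max_ge) auto

lemma lower_mark_attained: "p \<in> P \<Longrightarrow> \<exists>a\<in>Ps. (a, p) \<in> le \<and> lower_mark p = lam a"
proof -
  assume "p \<in> P"
  then have "lam ` {a \<in> Ps. (a, p) \<in> le} \<noteq> {}" using exists_mark_below by blast
  then have "lower_mark p \<in> lam ` {a \<in> Ps. (a, p) \<in> le}"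
    unfolding lower_mark_def using finite_marks by (intro Max_in) auto
  then show ?thesis by auto
qed

lemma lower_mark_le:
  assumes "(p, b) \<in> le" "b \<in> Ps"
  shows "lower_mark p \<le> lam b"
proof -
  obtain a where "a \<in> Ps" "(a, p) \<in> le" "lower_mark p = lam a"
    using lower_mark_attained le_carrier assms(1) by blast
  then show ?thesis using le_trans lam_mono assms by metis
qed

lemma lower_mark_mono:
  assumes "(p, q) \<in> le"
  shows "lower_mark p \<le> lower_mark q"
proof -
  obtain a where "a \<in> Ps" "(a, p) \<in> le" "lower_mark p = lam a"
    using lower_mark_attained le_carrier assms by blast
  then show ?thesis using le_trans lower_mark_ge assms by metis
qed

definition unmarked_cover :: "('a \<times> 'a) set" where
  "unmarked_cover = {(p, q). p \<in> P - Ps \<and> q \<in> P - Ps \<and> covers le p q}"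

definition chain_order :: "('a \<times> 'a) set" where
  "chain_order = Id_on (P - Ps) \<union> unmarked_cover\<^sup>+"

lemma unmarked_cover_carrier: "unmarked_cover \<subseteq> (P - Ps) \<times> (P - Ps)"
  unfolding unmarked_cover_def by auto

lemma unmarked_cover_trancl_imp_le: "(p, q) \<in> unmarked_cover\<^sup>+ \<Longrightarrow> (p, q) \<in> le"
proof (induction rule: trancl_induct)
  case (base q)
  then show ?case unfolding unmarked_cover_def by (simp add: covers_imp_le)
next
  case (step q r)
  then have "(q, r) \<in> le" unfolding unmarked_cover_def by (simp add: covers_imp_le)
  with step.IH show ?case by (rule le_trans)
qed

lemma chain_order_imp_le: "(p, q) \<in> chain_order \<Longrightarrow> (p, q) \<in> le"
  unfolding chain_order_def using le_refl unmarked_cover_trancl_imp_le by (auto simp: Id_on_iff)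

lemma trans_chain_order: "trans chain_order"
  unfolding chain_order_def trans_def by (blast intro: trancl_trans)

lemma poset_on_chain_order: "poset_on (P - Ps) chain_order"
  unfolding poset_on_def
proof (intro conjI)
  show "chain_order \<subseteq> (P - Ps) \<times> (P - Ps)"
    unfolding chain_order_def using trancl_subset_Sigma[OF unmarked_cover_carrier] by auto
  show "\<forall>x\<in>P - Ps. (x, x) \<in> chain_order" unfolding chain_order_def by auto
  show "trans chain_order" by (rule trans_chain_order)
  show "antisym chain_order"
    using chain_order_imp_le le_antisym unfolding antisym_def by blast
qed

lemma is_chain_unmarked_saturated:
  assumes "set ps \<subseteq> P - Ps" "successively (covers le) ps"
  shows "is_chain chain_order (set ps)"
proof (rule is_chain_if_successively[OF trans_chain_order])
  show "(x, x) \<in> chain_order" if "x \<in> set ps" for x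
    using that assms(1) unfolding chain_order_def by auto
  show "successively (\<lambda>u v. (u, v) \<in> chain_order) ps"
    using assms unfolding chain_order_def unmarked_cover_def
    by (induction ps rule: induct_list012) auto
qed

lemma chain_order_chain_has_greatest:
  assumes "A \<noteq> {}" "A \<subseteq> P - Ps" "is_chain chain_order A"
  shows "\<exists>m\<in>A. \<forall>x\<in>A. (x, m) \<in> chain_order"
proof -
  let ?S = "\<lambda>x y. (x, y) \<in> chain_order \<and> x \<noteq> y"
  have "transp ?S"
    using trans_chain_order chain_order_imp_le le_antisym unfolding transp_def trans_def by metis
  moreover have "finite A" using assms(2) finite_carrier finite_subset by blast
  ultimately obtain m where m: "m \<in> A" "\<And>z. z \<in> A \<Longrightarrow> \<not> ?S m z"
    using finite_has_maximal_rel[of A ?S] assms(1) by (auto simp: irreflp_def)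
  have "(x, m) \<in> chain_order" if "x \<in> A" for x
    using that m assms(2,3) unfolding is_chain_def chain_order_def by blast
  then show ?thesis using m(1) by blast
qed

lemma unmarked_path_through_chain:
  assumes "A \<subseteq> P - Ps" "is_chain chain_order A" "m \<in> A" "\<And>x. x \<in> A \<Longrightarrow> (x, m) \<in> chain_order"
  shows "\<exists>ps. successively (\<lambda>u v. (u, v) \<in> unmarked_cover) ps \<and> set ps \<subseteq> P - Ps \<and>
    A \<subseteq> set ps \<and> ps \<noteq> [] \<and> last ps = m"
  using assms
proof (induction "card A" arbitrary: A m rule: less_induct)
  case less
  show ?case
  proof (cases "A = {m}")
    case True
    moreover have "m \<in> P - Ps" using less.prems(1,3) by blast
    ultimately show ?thesis by (intro exI[of _ "[m]"]) simp
  next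
    case False
    let ?A = "A - {m}"
    have sub: "?A \<subseteq> P - Ps" using less.prems(1) by blast
    have chain: "is_chain chain_order ?A" using less.prems(2) unfolding is_chain_def by blast
    have "?A \<noteq> {}" using less.prems(3) False by blast
    then obtain m' where m': "m' \<in> ?A" "\<And>x. x \<in> ?A \<Longrightarrow> (x, m') \<in> chain_order"
      using chain_order_chain_has_greatest[OF _ sub chain] by blast
    have "finite A" using less.prems(1) finite_carrier finite_subset by blast
    then have "card ?A < card A" using less.prems(3) by (rule card_Diff1_less)
    then obtain ps where ps: "successively (\<lambda>u v. (u, v) \<in> unmarked_cover) ps"
      "set ps \<subseteq> P - Ps" "?A \<subseteq> set ps" "ps \<noteq> []" "last ps = m'"
      using less.hyps[OF _ sub chain m'] by blast
    have "(m', m) \<in> chain_order" "m' \<noteq> m" using less.prems(4) m'(1) by blast+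
    then have "(m', m) \<in> unmarked_cover\<^sup>+" unfolding chain_order_def Id_on_def by blast
    from trancl_imp_successively[OF this]
    obtain qs where qs: "successively (\<lambda>u v. (u, v) \<in> unmarked_cover) (m' # qs @ [m])"
      by blast
    have "successively (\<lambda>u v. (u, v) \<in> unmarked_cover) (ps @ qs @ [m])"
      using ps(1,4) qs ps(5) by (intro successively_append_last) simp_all
    moreover have "set (ps @ qs @ [m]) \<subseteq> P - Ps"
      using ps(2) successively_rel_set_subset[OF qs unmarked_cover_carrier] by simp
    moreover have "A \<subseteq> set (ps @ qs @ [m])" using ps(3) less.prems(3) by auto
    ultimately show ?thesis by (intro exI[of _ "ps @ qs @ [m]"]) simp
  qed
qed

lemma saturated_chain_through_chain:
  assumes "A \<subseteq> P - Ps" "A \<noteq> {}" "is_chain chain_order A"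
  obtains a b ps where "a \<in> Ps" "b \<in> Ps" "set ps \<subseteq> P - Ps"
    "successively (covers le) (a # ps @ [b])" "A \<subseteq> set ps"
proof -
  obtain m where "m \<in> A" "\<forall>x\<in>A. (x, m) \<in> chain_order"
    using chain_order_chain_has_greatest[OF assms(2,1,3)] by blast
  then obtain ps where ps: "successively (\<lambda>u v. (u, v) \<in> unmarked_cover) ps"
    "set ps \<subseteq> P - Ps" "A \<subseteq> set ps" "ps \<noteq> []"
    using unmarked_path_through_chain[OF assms(1,3)] by blast
  have covers: "successively (covers le) ps"
    using ps(1) by (rule successively_mono) (auto simp: unmarked_cover_def)
  have ends: "hd ps \<in> P - Ps" "last ps \<in> P - Ps"
    using ps(2,4) hd_in_set last_in_set by blast+
  obtain a qs where a: "a \<in> Ps" "set qs \<subseteq> P - Ps" "successively (covers le) (a # qs @ [hd ps])"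
    using saturated_chain_from_mark[OF ends(1)] by blast
  obtain b rs where b: "b \<in> Ps" "set rs \<subseteq> P - Ps" "successively (covers le) (last ps # rs @ [b])"
    using saturated_chain_to_mark[OF ends(2)] by blast
  have "a # qs @ ps = (a # qs @ [hd ps]) @ tl ps" using ps(4) by simp
  also have "successively (covers le) \<dots>"
    by (rule successively_append_last) (use a(3) covers ps(4) in simp_all)
  finally have "successively (covers le) ((a # qs @ ps) @ rs @ [b])"
    by (rule successively_append_last) (use b(3) ps(4) in simp_all)
  then have "successively (covers le) (a # (qs @ ps @ rs) @ [b])" by simp
  moreover have "set (qs @ ps @ rs) \<subseteq> P - Ps" "A \<subseteq> set (qs @ ps @ rs)"
    using a(2) b(2) ps(2,3) by auto
  ultimately show ?thesis using that a(1) b(1) by blast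
qed

definition potential_values :: "'a list \<Rightarrow> (nat \<Rightarrow> real) \<Rightarrow> 'a \<Rightarrow> real set" where
  "potential_values ps c w =
     lam ` {a \<in> Ps. (a, w) \<in> le} \<union> (\<lambda>i. c (Suc i)) ` {i. i < length ps \<and> (ps ! i, w) \<in> le}"

definition chain_potential :: "'a list \<Rightarrow> (nat \<Rightarrow> real) \<Rightarrow> 'a \<Rightarrow> real" where
  "chain_potential ps c w = Max (potential_values ps c w)"

lemma finite_potential_values: "finite (potential_values ps c w)"
  unfolding potential_values_def using finite_marks by simp

lemma potential_values_nonempty: "w \<in> P \<Longrightarrow> potential_values ps c w \<noteq> {}"
  unfolding potential_values_def using exists_mark_below by blast

lemma chain_potential_mono:
  assumes "(u, v) \<in> le"
  shows "chain_potential ps c u \<le> chain_potential ps c v"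
  unfolding chain_potential_def
proof (rule Max_mono[OF _ _ finite_potential_values])
  show "potential_values ps c u \<subseteq> potential_values ps c v"
    unfolding potential_values_def using assms le_trans by blast
  show "potential_values ps c u \<noteq> {}" using potential_values_nonempty le_carrier assms by blast
qed

context
  fixes ps :: "'a list" and c :: "nat \<Rightarrow> real"
  assumes unmarked: "set ps \<subseteq> P - Ps"
    and sorted: "sorted_wrt (strictly_below le) ps"
    and mono: "mono_on {..length ps} c"
    and above_marks: "\<And>i a. i < length ps \<Longrightarrow> a \<in> Ps \<Longrightarrow> (a, ps ! i) \<in> le \<Longrightarrow> lam a \<le> c i"
    and below_marks: "\<And>i b. i < length ps \<Longrightarrow> b \<in> Ps \<Longrightarrow> (ps ! i, b) \<in> le \<Longrightarrow> c (Suc i) \<le> lam b"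
begin

lemma chain_potential_mark:
  assumes "a \<in> Ps"
  shows "chain_potential ps c a = lam a"
  unfolding chain_potential_def
proof (rule Max_eqI[OF finite_potential_values])
  show "lam a \<in> potential_values ps c a"
    unfolding potential_values_def using assms marks_subset le_refl by blast
  fix t assume "t \<in> potential_values ps c a"
  then show "t \<le> lam a"
    unfolding potential_values_def using assms lam_mono below_marks by auto
qed

lemma chain_potential_nth:
  assumes i: "i < length ps"
  shows "chain_potential ps c (ps ! i) = c (Suc i)"
  unfolding chain_potential_def
proof (rule Max_eqI[OF finite_potential_values])
  show "c (Suc i) \<in> potential_values ps c (ps ! i)"
    unfolding potential_values_def using i unmarked le_refl nth_mem by blast
  fix t assume "t \<in> potential_values ps c (ps ! i)"
  then consider a where "a \<in> Ps" "(a, ps ! i) \<in> le" "t = lam a"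
    | j where "j < length ps" "(ps ! j, ps ! i) \<in> le" "t = c (Suc j)"
    unfolding potential_values_def by blast
  then show "t \<le> c (Suc i)"
  proof cases
    case 1
    then have "t \<le> c i" using above_marks i by simp
    also have "c i \<le> c (Suc i)" using i by (intro mono_onD[OF mono]) auto
    finally show ?thesis .
  next
    case 2
    then have "j \<le> i" using sorted_strictly_below_nth_le[OF sorted i] by blast
    then show ?thesis using 2 i by (simp add: mono_onD[OF mono])
  qed
qed

lemma chain_potential_below_cover:
  assumes i: "i < length ps" and q: "covers le q (ps ! i)"
  shows "chain_potential ps c q \<le> c i"
  unfolding chain_potential_def
proof (rule Max.boundedI[OF finite_potential_values])
  have "(q, ps ! i) \<in> le" using covers_imp_le[OF q] .
  then show "potential_values ps c q \<noteq> {}" using potential_values_nonempty le_carrier by blast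
  fix t assume "t \<in> potential_values ps c q"
  then consider a where "a \<in> Ps" "(a, q) \<in> le" "t = lam a"
    | j where "j < length ps" "(ps ! j, q) \<in> le" "t = c (Suc j)"
    unfolding potential_values_def by blast
  then show "t \<le> c i"
  proof cases
    case 1
    then show ?thesis using above_marks i le_trans \<open>(q, ps ! i) \<in> le\<close> by blast
  next
    case 2
    then have "j \<le> i"
      using sorted_strictly_below_nth_le[OF sorted i] le_trans \<open>(q, ps ! i) \<in> le\<close> by blast
    moreover have "j \<noteq> i"
      using 2 q le_antisym covers_imp_le unfolding covers_def strictly_below_def by blast
    ultimately show ?thesis using 2 i by (simp add: mono_onD[OF mono])
  qed
qed

lemma chain_point_mem: "chain_point ps c \<in> marked_chain_polytope P le Ps lam"
proof (rule marked_chain_polytope_memI)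
  show "chain_point ps c \<in> vecs (P - Ps)"
    unfolding vecs_def using unmarked by (auto intro: chain_point_outside)
  show "0 \<le> chain_point ps c i" for i
    unfolding chain_point_def
  proof (intro sum_nonneg)
    fix k assume "k \<in> {..<length ps}"
    then have "c k \<le> c (Suc k)" by (intro mono_onD[OF mono]) auto
    then show "0 \<le> (if ps ! k = i then c (Suc k) - c k else 0)" by simp
  qed
  show "chain_potential ps c u \<le> chain_potential ps c v" if "covers le u v" for u v
    using chain_potential_mono covers_imp_le[OF that] .
  show "chain_potential ps c a = lam a" if "a \<in> Ps" for a
    using chain_potential_mark[OF that] .
  show "chain_point ps c w \<le> chain_potential ps c w - chain_potential ps c q"
    if "covers le q w" for q w
  proof (cases "w \<in> set ps")
    case True
    then obtain i where "i < length ps" "w = ps ! i" by (auto simp: in_set_conv_nth)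
    then show ?thesis
      using chain_point_nth distinct_if_sorted_strictly_below[OF sorted] chain_potential_nth
        chain_potential_below_cover that by fastforce
  next
    case False
    then show ?thesis
      using chain_potential_mono[OF covers_imp_le[OF that]] by (simp add: chain_point_outside)
  qed
qed

end

end

locale irredundant_marked_poset = finite_marked_poset +
  assumes irredundant: "irredundant_marked le Ps lam"
begin

lemma irredundant_cover:
  "covers le p q \<Longrightarrow> a \<in> Ps \<Longrightarrow> b \<in> Ps \<Longrightarrow> (a, q) \<in> le \<Longrightarrow> (p, b) \<in> le \<Longrightarrow> a = b \<or> lam a < lam b"
  using irredundant unfolding irredundant_marked_def by blast

lemma irredundant_unmarked_cover:
  assumes "covers le p q" "p \<notin> Ps" "q \<notin> Ps" "a \<in> Ps" "b \<in> Ps" "(a, q) \<in> le" "(p, b) \<in> le"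
  shows "lam a < lam b"
proof -
  have "a \<noteq> b"
  proof
    assume "a = b"
    then have "strictly_below le p a" "strictly_below le a q"
      using assms unfolding strictly_below_def by auto
    then show False using assms(1) unfolding covers_def by blast
  qed
  then show ?thesis using irredundant_cover assms by blast
qed

lemma lower_mark_covered_mark:
  assumes "a \<in> Ps" "covers le a p"
  shows "lower_mark p = lam a"
proof -
  have "(a, p) \<in> le" using covers_imp_le assms(2) .
  then obtain a' where a': "a' \<in> Ps" "(a', p) \<in> le" "lower_mark p = lam a'"
    using lower_mark_attained le_carrier by blast
  have "a' = a \<or> lam a' < lam a"
    using irredundant_cover[OF assms(2) a'(1) assms(1) a'(2)] le_refl le_carrier \<open>(a, p) \<in> le\<close>
    by blast
  then show ?thesis using a'(3) lower_mark_ge[OF assms(1) \<open>(a, p) \<in> le\<close>] by auto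
qed

lemma lower_mark_less:
  assumes "covers le p q" "p \<notin> Ps" "q \<notin> Ps" "b \<in> Ps" "(p, b) \<in> le"
  shows "lower_mark q < lam b"
proof -
  obtain a where "a \<in> Ps" "(a, q) \<in> le" "lower_mark q = lam a"
    using lower_mark_attained le_carrier covers_imp_le[OF assms(1)] by blast
  then show ?thesis using irredundant_unmarked_cover assms by metis
qed

text \<open>The variant \<open>j\<close> lowers the heights at positions above \<open>j\<close> by \<open>\<delta>\<close>, which moves mass \<open>\<delta>\<close>
  from \<open>ps ! j\<close> to \<open>last ps\<close>.\<close>

definition ladder :: "'a list \<Rightarrow> 'a \<Rightarrow> real \<Rightarrow> nat \<Rightarrow> nat \<Rightarrow> real" where
  "ladder ps b \<delta> j i =
     (if i < length ps then lower_mark (ps ! i) + real i * \<delta> - (if j < i then \<delta> else 0) else lam b)"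

context
  fixes a b ps
  assumes a: "a \<in> Ps" and b: "b \<in> Ps" and unmarked: "set ps \<subseteq> P - Ps"
    and saturated: "successively (covers le) (a # ps @ [b])" and nonempty: "ps \<noteq> []"
begin

lemma exists_ladder_step:
  "\<exists>\<delta>>0. \<forall>i w. 0 < i \<longrightarrow> i < length ps \<longrightarrow> w \<in> Ps \<longrightarrow> (ps ! (i - 1), w) \<in> le \<longrightarrow>
     lower_mark (ps ! i) + real i * \<delta> \<le> lam w"
proof -
  let ?k = "length ps"
  let ?T = "{(i, w). 0 < i \<and> i < ?k \<and> w \<in> Ps \<and> (ps ! (i - 1), w) \<in> le}"
  have "finite ?T" by (rule finite_subset[of _ "{..<?k} \<times> Ps"]) (use finite_marks in auto)
  moreover have "lower_mark (ps ! fst t) < lam (snd t)" if "t \<in> ?T" for t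
  proof -
    obtain i w where t: "t = (i, w)" by fastforce
    have "covers le (ps ! (i - 1)) (ps ! i)"
      using successively_nth[OF saturated_chain_interior(4)[OF saturated], of "i - 1"] that t by simp
    moreover have "ps ! (i - 1) \<in> set ps" "ps ! i \<in> set ps" using that t by auto
    then have "ps ! (i - 1) \<notin> Ps" "ps ! i \<notin> Ps" using unmarked by auto
    ultimately show ?thesis using lower_mark_less that t by simp
  qed
  ultimately have "\<exists>\<epsilon>>0. \<forall>t\<in>?T. lower_mark (ps ! fst t) + \<epsilon> \<le> lam (snd t)"
    by (rule finite_uniform_gap)
  then obtain \<epsilon> where \<epsilon>: "0 < \<epsilon>" "\<forall>t\<in>?T. lower_mark (ps ! fst t) + \<epsilon> \<le> lam (snd t)"
    by blast
  have "lower_mark (ps ! i) + real i * (\<epsilon> / ?k) \<le> lam w"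
    if "0 < i" "i < ?k" "w \<in> Ps" "(ps ! (i - 1), w) \<in> le" for i w
  proof -
    have "real i * (\<epsilon> / ?k) \<le> real ?k * (\<epsilon> / ?k)"
      using that(2) \<epsilon>(1) by (intro mult_right_mono) auto
    then have "real i * (\<epsilon> / ?k) \<le> \<epsilon>" using nonempty by simp
    then show ?thesis using bspec[OF \<epsilon>(2), of "(i, w)"] that by simp
  qed
  moreover have "0 < \<epsilon> / ?k" using \<epsilon>(1) nonempty by simp
  ultimately show ?thesis by blast
qed

context
  fixes \<delta> :: real
  assumes step: "0 \<le> \<delta>"
    and gap: "\<And>i w. 0 < i \<Longrightarrow> i < length ps \<Longrightarrow> w \<in> Ps \<Longrightarrow> (ps ! (i - 1), w) \<in> le \<Longrightarrow>
      lower_mark (ps ! i) + real i * \<delta> \<le> lam w"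
begin

lemma ladder_le_top: "ladder ps b \<delta> j i \<le> lam b"
proof (cases "0 < i \<and> i < length ps")
  case True
  then show ?thesis
    using gap[of i b] saturated_chain_interior(3)[OF saturated] b step by (auto simp: ladder_def)
next
  case False
  then show ?thesis
    using lower_mark_le[OF saturated_chain_interior(3)[OF saturated] b] nonempty
    by (auto simp: ladder_def)
qed

lemma ladder_mono: "mono_on {..length ps} (ladder ps b \<delta> j)"
proof (rule mono_onI)
  fix r s assume rs: "r \<in> {..length ps}" "s \<in> {..length ps}" "r \<le> s"
  show "ladder ps b \<delta> j r \<le> ladder ps b \<delta> j s"
  proof (cases "s < length ps")
    case True
    have "lower_mark (ps ! r) \<le> lower_mark (ps ! s)"
      using sorted_wrt_nth_less[OF saturated_chain_interior(1)[OF saturated], of r s] rs True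
        unmarked le_refl
      by (cases "r = s") (auto simp: strictly_below_def intro: lower_mark_mono)
    moreover have "real r * \<delta> + \<delta> \<le> real s * \<delta>" if "r < s"
      using that step mult_right_mono[of "real r + 1" "real s" \<delta>] by (simp add: distrib_right)
    ultimately show ?thesis using True rs step by (cases "r = s") (auto simp: ladder_def)
  next
    case False
    then show ?thesis using ladder_le_top[of j r] rs by (simp add: ladder_def)
  qed
qed

lemma ladder_above_marks:
  assumes "i < length ps" "a' \<in> Ps" "(a', ps ! i) \<in> le"
  shows "lam a' \<le> ladder ps b \<delta> j i"
proof -
  have "0 \<le> real i * \<delta> - (if j < i then \<delta> else 0)"
    using step by (cases "j < i") (auto intro: mult_right_mono[of 1 "real i" \<delta>, simplified])
  then show ?thesis using lower_mark_ge[OF assms(2,3)] assms(1) by (simp add: ladder_def)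
qed

lemma ladder_below_marks:
  assumes i: "i < length ps" and w: "w \<in> Ps" "(ps ! i, w) \<in> le"
  shows "ladder ps b \<delta> j (Suc i) \<le> lam w"
proof (cases "Suc i < length ps")
  case True
  then show ?thesis using gap[of "Suc i" w] w step by (simp add: ladder_def)
next
  case False
  then have "i = length ps - 1" using i by simp
  then have "ps ! i = last ps" using nonempty by (simp add: last_conv_nth)
  then have "b = w \<or> lam b < lam w"
    using irredundant_cover[OF successively_ends(2)[OF saturated nonempty] b w(1)] w(2)
      le_refl marks_subset b by auto
  then show ?thesis using False by (auto simp: ladder_def)
qed

lemma chain_point_ladder_mem: "chain_point ps (ladder ps b \<delta> j) \<in> marked_chain_polytope P le Ps lam"
  using chain_point_mem[OF unmarked saturated_chain_interior(1)[OF saturated] ladder_mono]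
    ladder_above_marks ladder_below_marks by blast

end

lemma sum_list_ladder_point:
  "sum_list (map (chain_point ps (ladder ps b \<delta> (length ps))) ps) = lam b - lam a"
proof -
  have "lower_mark (ps ! 0) = lam a"
    using lower_mark_covered_mark[OF a successively_ends(1)[OF saturated nonempty]] nonempty
    by (simp add: hd_conv_nth)
  then show ?thesis
    unfolding sum_list_chain_point[OF saturated_chain_interior(2)[OF saturated]]
    using nonempty by (simp add: ladder_def)
qed

lemma ladder_point_shift:
  assumes "Suc j < length ps"
  shows "chain_point ps (ladder ps b \<delta> j) =
    (chain_point ps (ladder ps b \<delta> (length ps)))
      (ps ! j := chain_point ps (ladder ps b \<delta> (length ps)) (ps ! j) - \<delta>,
       last ps := chain_point ps (ladder ps b \<delta> (length ps)) (last ps) + \<delta>)"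
proof -
  have "ladder ps b \<delta> j =
      (\<lambda>i. ladder ps b \<delta> (length ps) i - (if j < i \<and> i < length ps then \<delta> else 0))"
    by (auto simp: ladder_def)
  then show ?thesis
    using chain_point_shift[OF saturated_chain_interior(2)[OF saturated] assms] by simp
qed

lemma saturated_chain_perturbation:
  obtains \<delta> z where "0 < \<delta>" "z \<in> marked_chain_polytope P le Ps lam"
    "sum_list (map z ps) = lam b - lam a"
    "\<And>j. Suc j < length ps \<Longrightarrow>
      z(ps ! j := z (ps ! j) - \<delta>, last ps := z (last ps) + \<delta>) \<in> marked_chain_polytope P le Ps lam"
proof -
  obtain \<delta> where \<delta>: "0 < \<delta>" and gap: "\<And>i w. 0 < i \<Longrightarrow> i < length ps \<Longrightarrow> w \<in> Ps \<Longrightarrow>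
      (ps ! (i - 1), w) \<in> le \<Longrightarrow> lower_mark (ps ! i) + real i * \<delta> \<le> lam w"
    using exists_ladder_step by blast
  have mem: "chain_point ps (ladder ps b \<delta> j) \<in> marked_chain_polytope P le Ps lam" for j
    by (rule chain_point_ladder_mem[OF less_imp_le[OF \<delta>]]) (rule gap)
  show ?thesis
  proof (rule that[OF \<delta> mem sum_list_ladder_point])
    fix j assume "Suc j < length ps"
    then show "(chain_point ps (ladder ps b \<delta> (length ps)))
      (ps ! j := chain_point ps (ladder ps b \<delta> (length ps)) (ps ! j) - \<delta>,
       last ps := chain_point ps (ladder ps b \<delta> (length ps)) (last ps) + \<delta>)
      \<in> marked_chain_polytope P le Ps lam"
      using mem[of j] ladder_point_shift[OF \<open>Suc j < length ps\<close>] by simp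
  qed
qed

end

end

locale special_hpoly_description = irredundant_marked_poset +
  fixes N :: "'a set" and II :: "'a set set"
  assumes unit_sums_unmarked: "II \<subseteq> Pow (P - Ps)"
    and description: "marked_chain_polytope P le Ps lam = special_hpoly (P - Ps) N II"
begin

context
  fixes a b ps
  assumes a: "a \<in> Ps" and b: "b \<in> Ps" and unmarked: "set ps \<subseteq> P - Ps"
    and saturated: "successively (covers le) (a # ps @ [b])" and nonempty: "ps \<noteq> []"
begin

lemma mark_difference_ge_1: "1 \<le> lam b - lam a"
proof -
  let ?x = "\<lambda>v. if v \<in> set ps then 1 / real (card (set ps)) else 0"
  have x: "?x \<in> marked_chain_polytope P le Ps lam"
    unfolding description
    using special_hpoly_uniform[OF finite_unmarked unit_sums_unmarked unmarked] nonempty by simp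
  have "sum_list (map ?x ps) \<le> lam b - lam a"
    using marked_chain_polytopeD(2)[OF x a b unmarked saturated] .
  moreover have "sum_list (map ?x ps) = 1"
    using saturated_chain_interior(2)[OF saturated] nonempty by (simp add: sum_list_distinct_conv_sum_set)
  ultimately show ?thesis by simp
qed

lemma raise_last_mem:
  assumes gt: "1 < lam b - lam a" and \<delta>: "0 \<le> \<delta>" and z: "z \<in> marked_chain_polytope P le Ps lam"
    and sum_z: "sum_list (map z ps) = lam b - lam a"
    and moves: "\<And>j. Suc j < length ps \<Longrightarrow>
      z(ps ! j := z (ps ! j) - \<delta>, last ps := z (last ps) + \<delta>) \<in> marked_chain_polytope P le Ps lam"
  shows "z(last ps := z (last ps) + \<delta>) \<in> marked_chain_polytope P le Ps lam"
  unfolding description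
proof (rule special_hpoly_raise[OF _ finite_unmarked unit_sums_unmarked _ unmarked _ _ \<delta>])
  show "z \<in> special_hpoly (P - Ps) N II" using z description by simp
  show "0 \<le> z v" if "v \<in> P - Ps" for v using marked_chain_polytopeD(1)[OF z that] .
  show "last ps \<in> set ps" using nonempty by simp
  show "1 < sum z (set ps)"
    using sum_z gt saturated_chain_interior(2)[OF saturated] by (simp add: sum_list_distinct_conv_sum_set)
  fix j assume "j \<in> set ps" "j \<noteq> last ps"
  then obtain i where "i < length ps" "j = ps ! i" by (auto simp: in_set_conv_nth)
  moreover have "i \<noteq> length ps - 1"
    using \<open>j \<noteq> last ps\<close> \<open>j = ps ! i\<close> nonempty by (auto simp: last_conv_nth)
  ultimately have "Suc i < length ps" by simp
  then show "z(j := z j - \<delta>, last ps := z (last ps) + \<delta>) \<in> special_hpoly (P - Ps) N II"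
    using moves description \<open>j = ps ! i\<close> by simp
qed

lemma mark_difference_le_1: "lam b - lam a \<le> 1"
proof (rule ccontr)
  assume "\<not> lam b - lam a \<le> 1"
  show False
  proof (rule saturated_chain_perturbation[OF a b unmarked saturated nonempty])
    fix \<delta> z
    assume \<delta>: "0 < \<delta>" and z: "z \<in> marked_chain_polytope P le Ps lam"
      and sum_z: "sum_list (map z ps) = lam b - lam a"
      and "\<And>j. Suc j < length ps \<Longrightarrow>
        z(ps ! j := z (ps ! j) - \<delta>, last ps := z (last ps) + \<delta>) \<in> marked_chain_polytope P le Ps lam"
    then have raised: "z(last ps := z (last ps) + \<delta>) \<in> marked_chain_polytope P le Ps lam"
      using raise_last_mem \<open>\<not> lam b - lam a \<le> 1\<close> by simp
    have l: "last ps \<in> set ps" using nonempty by simp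
    have "sum (z(last ps := z (last ps) + \<delta>)) (set ps) = sum z (set ps) + \<delta>"
      using sum.remove[OF finite_set l, of "z(last ps := z (last ps) + \<delta>)"] sum.remove[OF finite_set l, of z]
      by simp
    then have "sum_list (map (z(last ps := z (last ps) + \<delta>)) ps) = lam b - lam a + \<delta>"
      using sum_z saturated_chain_interior(2)[OF saturated] by (simp add: sum_list_distinct_conv_sum_set)
    then show False
      using marked_chain_polytopeD(2)[OF raised a b unmarked saturated] \<delta> by simp
  qed
qed

lemma saturated_chain_mark_difference: "lam b - lam a = 1"
  using mark_difference_ge_1 mark_difference_le_1 by simp

end

lemma marked_chain_polytope_subset_chain_polytope:
  "marked_chain_polytope P le Ps lam \<subseteq> chain_polytope (P - Ps) chain_order"
proof
  fix x assume x: "x \<in> marked_chain_polytope P le Ps lam"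
  show "x \<in> chain_polytope (P - Ps) chain_order"
    unfolding chain_polytope_def
  proof (intro CollectI conjI allI impI ballI)
    show "x \<in> vecs (P - Ps)" using x unfolding marked_chain_polytope_def by blast
    show "0 \<le> x c" if "c \<in> P - Ps" for c using marked_chain_polytopeD(1)[OF x that] .
    fix A assume A: "A \<subseteq> P - Ps \<and> is_chain chain_order A"
    show "sum x A \<le> 1"
    proof (cases "A = {}")
      case False
      show ?thesis
      proof (rule saturated_chain_through_chain)
        show "A \<subseteq> P - Ps" "is_chain chain_order A" using A by simp_all
        show "A \<noteq> {}" by (rule False)
        fix a b ps
        assume abps: "a \<in> Ps" "b \<in> Ps" "set ps \<subseteq> P - Ps"
          "successively (covers le) (a # ps @ [b])" "A \<subseteq> set ps"
        then have "ps \<noteq> []" using False by auto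
        have "sum x A \<le> sum x (set ps)"
          using abps(3,5) marked_chain_polytopeD(1)[OF x] by (intro sum_mono2) auto
        also have "\<dots> = sum_list (map x ps)"
          using saturated_chain_interior(2)[OF abps(4)]
          by (simp add: sum_list_distinct_conv_sum_set)
        also have "\<dots> \<le> lam b - lam a" using marked_chain_polytopeD(2)[OF x abps(1-4)] .
        also have "\<dots> = 1" using saturated_chain_mark_difference[OF abps(1-4) \<open>ps \<noteq> []\<close>] .
        finally show ?thesis .
      qed
    qed simp
  qed
qed

lemma chain_polytope_subset_marked_chain_polytope:
  "chain_polytope (P - Ps) chain_order \<subseteq> marked_chain_polytope P le Ps lam"
proof
  fix x assume x: "x \<in> chain_polytope (P - Ps) chain_order"
  show "x \<in> marked_chain_polytope P le Ps lam"
    unfolding marked_chain_polytope_def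
  proof (intro CollectI conjI allI impI ballI)
    show "x \<in> vecs (P - Ps)" using x unfolding chain_polytope_def by blast
    show "0 \<le> x i" if "i \<in> P - Ps" for i using x that unfolding chain_polytope_def by blast
    fix a b ps
    assume "a \<in> Ps \<and> b \<in> Ps \<and> set ps \<subseteq> P - Ps \<and> successively (covers le) (a # ps @ [b])"
    then have a: "a \<in> Ps" and b: "b \<in> Ps" and unmarked: "set ps \<subseteq> P - Ps"
      and saturated: "successively (covers le) (a # ps @ [b])" by simp_all
    show "sum_list (map x ps) \<le> lam b - lam a"
    proof (cases "ps = []")
      case True
      then have "covers le a b" using saturated by simp
      then show ?thesis using True lam_mono[OF a b covers_imp_le] by simp
    next
      case False
      have "is_chain chain_order (set ps)"
        using is_chain_unmarked_saturated[OF unmarked saturated_chain_interior(4)[OF saturated]] .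
      then have "sum x (set ps) \<le> 1" using x unmarked unfolding chain_polytope_def by blast
      also have "\<dots> = lam b - lam a"
        using saturated_chain_mark_difference[OF a b unmarked saturated False] by simp
      finally show ?thesis
        using saturated_chain_interior(2)[OF saturated]
        by (simp add: sum_list_distinct_conv_sum_set)
    qed
  qed
qed

lemma marked_chain_polytope_eq_chain_polytope:
  "marked_chain_polytope P le Ps lam = chain_polytope (P - Ps) chain_order"
  using marked_chain_polytope_subset_chain_polytope chain_polytope_subset_marked_chain_polytope
  by (rule subset_antisym)

end

theorem lemma4p1:
  fixes P Ps :: "'a set" and le :: "('a \<times> 'a) set" and lam :: "'a \<Rightarrow> real"
    and N :: "'a set" and II :: "'a set set"
  assumes "marked_poset P le Ps lam"
    and "strict_marked le Ps lam"
    and "irredundant_marked le Ps lam"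
    and "N \<subseteq> P - Ps" and "II \<subseteq> Pow (P - Ps)"
    and "marked_chain_polytope P le Ps lam = special_hpoly (P - Ps) N II"
    and "\<forall>i\<in>N. special_hpoly (P - Ps) (N - {i}) II \<noteq> marked_chain_polytope P le Ps lam"
    and "\<forall>I\<in>II. special_hpoly (P - Ps) N (II - {I}) \<noteq> marked_chain_polytope P le Ps lam"
  shows "\<exists>R. poset_on (P - Ps) R \<and> marked_chain_polytope P le Ps lam = chain_polytope (P - Ps) R"
proof -
  interpret special_hpoly_description P Ps le lam N II
    using assms(1,3,5,6) by unfold_locales
  show ?thesis
    using poset_on_chain_order marked_chain_polytope_eq_chain_polytope by blast
qed

end
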